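(* Let $m\ge 3$ and let $T_m$ be the graph defined below. Then the eigenvalues of $T_m$ (with multiplicity) are \[ \cos\tfrac{2\pi j}{m}+\cos\tfrac{2\pi \ell}{m}\pm\sqrt{\left(\cos\tfrac{2\pi j}{m}-\cos\tfrac{2\pi \ell}{m}\right)^2+1} \] for all $(j,\ell)\in\mathbb{Z}_m\times\mathbb{Z}_m$ (both signs).
   Context: For $m\ge3$, $T_m$ is the cubic graph on $2m^2$ vertices $\{x^+_{i,j},\,x^-_{i,j}\mid i,j\in\mathbb{Z}_m\}$ with edges $\{x^+_{i,j},x^+_{i,j+1}\}$, $\{x^-_{i,j},x^-_{i,j+1}\}$ and $\{x^+_{i,j},x^-_{j,i}\}$ for all $i,j\in\mathbb{Z}_m$. (It is the vertex truncation of the standard regular embedding of $K_{m,m}$.) Eigenvalues are those of the adjacency matrix. *)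

theory Defs
  imports Complex_Main "Jordan_Normal_Form.Char_Poly"
begin

text \<open>Vertices of T_m are encoded by naturals v < 2*m^2: v corresponds to
  the triple (s, i, j) = (v div m^2, (v div m) mod m, v mod m), where
  s = 0 stands for x^+_{i,j} and s = 1 for x^-_{i,j}; i, j are residues mod m.\<close>

definition Tm_vertex :: "nat \<Rightarrow> nat \<Rightarrow> nat \<times> nat \<times> nat" where
  "Tm_vertex m v = (v div (m * m), (v div m) mod m, v mod m)"

definition Tm_adj :: "nat \<Rightarrow> nat \<times> nat \<times> nat \<Rightarrow> nat \<times> nat \<times> nat \<Rightarrow> bool" where
  "Tm_adj m u w = (case u of (s, i, j) \<Rightarrow> case w of (s', i', j') \<Rightarrow>
      (s = s' \<and> i = i' \<and> (j' = (j + 1) mod m \<or> j = (j' + 1) mod m))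
    \<or> (s = 0 \<and> s' = 1 \<and> i' = j \<and> j' = i)
    \<or> (s = 1 \<and> s' = 0 \<and> i' = j \<and> j' = i))"

definition Tm_adjacency :: "nat \<Rightarrow> real mat" where
  "Tm_adjacency m = mat (2 * m * m) (2 * m * m)
     (\<lambda>(u, w). if Tm_adj m (Tm_vertex m u) (Tm_vertex m w) then 1 else 0)"

end

theory Submission
  imports Defs
begin

(* The eigenvectors can be written down.  Identify x^+_{i,j}, x^-_{i,j} with (0, i, j), (1, i, j)
   and put \<omega> = cis (2 \<pi> / m).  For (a, b) in Z_m^2 and a scalar \<beta>, the function
     f (x^+_{i,j}) = \<omega>^(a i + b j),    f (x^-_{i,j}) = \<beta> \<omega>^(b i + a j)
   satisfies A f = \<mu> f iff \<mu> = 2 cos (2 \<pi> b / m) + \<beta> (the equation at x^+) and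
   \<mu> \<beta> = 2 cos (2 \<pi> a / m) \<beta> + 1 (the equation at x^-), i.e. iff \<beta> = \<mu> - 2 cos (2 \<pi> b / m) and
   (\<mu> - 2 cos (2 \<pi> a / m)) (\<mu> - 2 cos (2 \<pi> b / m)) = 1.  The two roots \<mu> of this quadratic are
   the claimed eigenvalues.  The resulting 2 m^2 eigenvectors are pairwise orthogonal: for
   different (a, b) by orthogonality of the characters of Z_m^2, and for the two roots belonging
   to the same (a, b) because their ratios \<beta> multiply to -1.  So they form an eigenbasis and the
   characteristic polynomial is the product of the corresponding linear factors. *)

lemma orthogonal_columns_left_inverse:
  fixes P :: "'a :: conjugatable_ordered_field mat"
  assumes P: "P \<in> carrier_mat n n"
    and nonzero: "\<And>k. k < n \<Longrightarrow> col P k \<noteq> 0\<^sub>v n"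
    and orth: "\<And>k k'. k < n \<Longrightarrow> k' < n \<Longrightarrow> k \<noteq> k' \<Longrightarrow> col P k' \<bullet>c col P k = 0"
  shows "mat n n (\<lambda>(k, i). conjugate (P $$ (i, k)) / (col P k \<bullet>c col P k)) * P = 1\<^sub>m n"
    (is "?Q * P = _")
proof (rule eq_matI)
  fix k k' assume "k < dim_row (1\<^sub>m n)" "k' < dim_col (1\<^sub>m n)"
  then have kk: "k < n" "k' < n"
    by auto
  have "(?Q * P) $$ (k, k') = (col P k' \<bullet>c col P k) / (col P k \<bullet>c col P k)"
    using kk P by (simp add: scalar_prod_def sum_divide_distrib ac_simps)
  also have "\<dots> = 1\<^sub>m n $$ (k, k')"
  proof (cases "k = k'")
    case True
    have "col P k \<in> carrier_vec n"
      using P by (simp add: carrier_vecI)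
    then have "col P k \<bullet>c col P k \<noteq> 0"
      using nonzero[OF kk(1)] by simp
    then show ?thesis
      using True kk by simp
  qed (use kk orth in simp)
  finally show "(?Q * P) $$ (k, k') = 1\<^sub>m n $$ (k, k')" .
qed (use P in auto)

lemma char_poly_eigenbasis:
  fixes A P Q :: "'a :: field mat"
  assumes A: "A \<in> carrier_mat n n" and P: "P \<in> carrier_mat n n" and Q: "Q \<in> carrier_mat n n"
    and QP: "Q * P = 1\<^sub>m n"
    and eig: "\<And>k. k < n \<Longrightarrow> A *\<^sub>v col P k = d k \<cdot>\<^sub>v col P k"
  shows "char_poly A = (\<Prod>k<n. [:- d k, 1:])"
proof -
  define D where "D = mat n n (\<lambda>(k, k'). if k = k' then d k else 0)"
  have D: "D \<in> carrier_mat n n"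
    by (simp add: D_def)
  have PQ: "P * Q = 1\<^sub>m n"
    by (rule mat_mult_left_right_inverse[OF Q P QP])
  have AP: "A * P = P * D"
  proof (rule eq_matI)
    fix i k assume "i < dim_row (P * D)" "k < dim_col (P * D)"
    then have ik: "i < n" "k < n"
      using P D by auto
    have "(A * P) $$ (i, k) = (d k \<cdot>\<^sub>v col P k) $ i"
      using ik A P by (simp flip: eig[OF ik(2)])
    also have "\<dots> = (P * D) $$ (i, k)"
      using ik P unfolding D_def by (simp add: scalar_prod_def if_distrib cong: if_cong)
    finally show "(A * P) $$ (i, k) = (P * D) $$ (i, k)" .
  qed (use A P D in auto)
  have "A = A * (P * Q)"
    using A by (simp add: PQ)
  also have "\<dots> = P * D * Q"
    using A P Q D by (simp flip: AP)
  finally have "similar_mat A D"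
    using A P Q D by (intro similar_matI[OF _ PQ QP]) auto
  then have "char_poly A = char_poly D"
    by (rule char_poly_similar)
  also have "\<dots> = (\<Prod>a\<leftarrow>diag_mat D. [:- a, 1:])"
    by (rule char_poly_upper_triangular[OF D]) (simp add: upper_triangular_def D_def)
  also have "\<dots> = (\<Prod>k\<leftarrow>[0..<n]. [:- d k, 1:])"
    unfolding diag_mat_def D_def by (intro arg_cong[where f = prod_list] map_cong) auto
  also have "\<dots> = (\<Prod>k<n. [:- d k, 1:])"
    by (metis atLeast0LessThan distinct_upt prod.distinct_set_conv_list set_upt)
  finally show ?thesis .
qed

lemma char_poly_orthogonal_eigenvectors:
  fixes A :: "'a :: conjugatable_ordered_field mat"
    and x :: "'b \<Rightarrow> 'a vec" and ev :: "'b \<Rightarrow> 'a"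
  assumes A: "A \<in> carrier_mat n n"
    and J: "finite J" "card J = n"
    and eig: "\<And>j. j \<in> J \<Longrightarrow> eigenvector A (x j) (ev j)"
    and orth: "\<And>j j'. j \<in> J \<Longrightarrow> j' \<in> J \<Longrightarrow> j \<noteq> j' \<Longrightarrow> x j \<bullet>c x j' = 0"
  shows "char_poly A = (\<Prod>j\<in>J. [:- ev j, 1:])"
proof -
  obtain \<kappa> where \<kappa>: "bij_betw \<kappa> {..<n} J"
    using ex_bij_betw_nat_finite[OF J(1)] J(2) by (auto simp: atLeast0LessThan)
  define P where "P = mat n n (\<lambda>(i, k). x (\<kappa> k) $ i)"
  have P: "P \<in> carrier_mat n n"
    by (simp add: P_def)
  have x: "x (\<kappa> k) \<in> carrier_vec n" "x (\<kappa> k) \<noteq> 0\<^sub>v n" "A *\<^sub>v x (\<kappa> k) = ev (\<kappa> k) \<cdot>\<^sub>v x (\<kappa> k)"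
    if "k < n" for k
    using eig[of "\<kappa> k"] bij_betwE[OF \<kappa>] that A unfolding eigenvector_def by auto
  have col: "col P k = x (\<kappa> k)" if "k < n" for k
    using that x(1)[OF that] unfolding P_def by (intro eq_vecI) auto
  have "\<kappa> k \<noteq> \<kappa> k'" if "k < n" "k' < n" "k \<noteq> k'" for k k'
    using that \<kappa> by (auto simp: bij_betw_def inj_on_def)
  then have QP: "mat n n (\<lambda>(k, i). conjugate (P $$ (i, k)) / (col P k \<bullet>c col P k)) * P = 1\<^sub>m n"
    using x(2) orth bij_betwE[OF \<kappa>]
    by (intro orthogonal_columns_left_inverse[OF P]) (auto simp: col)
  have "char_poly A = (\<Prod>k<n. [:- ev (\<kappa> k), 1:])"
    by (rule char_poly_eigenbasis[OF A P _ QP]) (simp_all add: col x(3))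
  also have "\<dots> = (\<Prod>j\<in>J. [:- ev j, 1:])"
    by (rule prod.reindex_bij_betw[OF \<kappa>])
  finally show ?thesis .
qed

interpretation of_real_poly_hom: map_poly_inj_idom_hom "of_real :: real \<Rightarrow> complex" ..

lemma char_poly_eq_if_of_real_eq:
  fixes A :: "real mat"
  assumes "A \<in> carrier_mat n n"
    and "char_poly (map_mat complex_of_real A) = map_poly complex_of_real p"
  shows "char_poly A = p"
  using assms of_real_hom.char_poly_hom of_real_poly_hom.injectivity by metis

definition unity_root :: "nat \<Rightarrow> int \<Rightarrow> complex" where
  "unity_root m k = cis (2 * pi * of_int k / of_nat m)"

lemma unity_root_add: "unity_root m (k + l) = unity_root m k * unity_root m l"
  by (simp add: unity_root_def cis_mult add_divide_distrib distrib_left)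

lemma unity_root_power: "unity_root m (k * int i) = unity_root m k ^ i"
  by (simp add: unity_root_def DeMoivre field_simps)

lemma cnj_unity_root: "cnj (unity_root m k) = unity_root m (- k)"
  by (simp add: unity_root_def cis_cnj)

lemma unity_root_add_uminus:
  "unity_root m k + unity_root m (- k) = of_real (2 * cos (2 * pi * of_int k / of_nat m))"
  by (simp add: unity_root_def complex_eq_iff)

lemma unity_root_eq_1_iff:
  assumes "m > 0"
  shows "unity_root m k = 1 \<longleftrightarrow> int m dvd k"
proof
  assume "unity_root m k = 1"
  then have "cos (2 * pi * of_int k / of_nat m) = 1"
    unfolding unity_root_def by (metis cis.sel(1) one_complex.sel(1))
  then obtain q :: int where "2 * pi * of_int k / of_nat m = of_int q * 2 * pi"
    by (auto simp: cos_one_2pi_int)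
  then have "of_int k = (of_int (q * int m) :: real)"
    using assms by (simp add: field_simps)
  then show "int m dvd k"
    by (metis dvd_triv_right of_int_eq_iff)
next
  assume "int m dvd k"
  then obtain q where "k = int m * q" ..
  then have "2 * pi * of_int k / of_nat m = 2 * pi * of_int q"
    using assms by simp
  then show "unity_root m k = 1"
    unfolding unity_root_def by simp
qed

lemma sum_unity_root_powers:
  assumes "m > 0"
  shows "(\<Sum>i<m. unity_root m (k * int i)) = (if int m dvd k then of_nat m else 0)"
proof (cases "int m dvd k")
  case True
  then have "unity_root m k = 1"
    using assms by (simp add: unity_root_eq_1_iff)
  then show ?thesis
    using True by (simp add: unity_root_power)
next
  case False
  then have "unity_root m k \<noteq> 1" and "unity_root m k ^ m = 1"
    using assms by (simp_all add: unity_root_eq_1_iff flip: unity_root_power)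
  then show ?thesis
    using False by (simp add: unity_root_power geometric_sum)
qed

lemma sum_unity_root_orthogonal:
  assumes "a < m" "a' < m"
  shows "(\<Sum>i<m. unity_root m ((int a - int a') * int i)) = (if a = a' then of_nat m else 0)"
proof -
  have "int m dvd (int a - int a') \<longleftrightarrow> a = a'"
  proof
    assume dvd: "int m dvd (int a - int a')"
    show "a = a'"
    proof (rule ccontr)
      assume "a \<noteq> a'"
      then have "int m \<le> \<bar>int a - int a'\<bar>"
        using dvd_imp_le_int[OF _ dvd] by simp
      then show False
        using assms by linarith
    qed
  qed simp
  then show ?thesis
    using assms sum_unity_root_powers[of m "int a - int a'"] by simp
qed

lemma unity_root_cong:
  assumes "m > 0" "k mod int m = l mod int m"
  shows "unity_root m k = unity_root m l"
proof -
  have "unity_root m (k - l) = 1"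
    using assms by (simp add: unity_root_eq_1_iff mod_eq_dvd_iff)
  then show ?thesis
    using unity_root_add[of m "k - l" l] by simp
qed

lemma unity_root_succ_mod:
  assumes "m > 0"
  shows "unity_root m (k * int ((j + 1) mod m)) = unity_root m (k * int j) * unity_root m k"
proof -
  have "k * int ((j + 1) mod m) mod int m = (k * int j + k) mod int m"
    by (simp add: of_nat_mod mod_mult_right_eq distrib_left add.commute)
  then show ?thesis
    unfolding unity_root_add[symmetric] by (rule unity_root_cong[OF assms])
qed

lemma unity_root_pred_mod:
  assumes "m > 0"
  shows "unity_root m (k * int ((j + m - 1) mod m)) = unity_root m (k * int j) * unity_root m (- k)"
proof -
  have "k * int ((j + m - 1) mod m) mod int m = k * int (j + m - 1) mod int m"
    by (simp add: of_nat_mod mod_mult_right_eq)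
  also have "k * int (j + m - 1) = (k * int j + - k) + k * int m"
    using assms by (simp add: algebra_simps)
  finally have "k * int ((j + m - 1) mod m) mod int m = (k * int j + - k) mod int m"
    by simp
  then show ?thesis
    unfolding unity_root_add[symmetric] by (rule unity_root_cong[OF assms])
qed

definition Tm_vertices :: "nat \<Rightarrow> (nat \<times> nat \<times> nat) set" where
  "Tm_vertices m = {..<2} \<times> {..<m} \<times> {..<m}"

lemma Tm_vertex_encode:
  assumes "i < m" "j < m"
  shows "Tm_vertex m ((s * m + i) * m + j) = (s, i, j)"
proof -
  have "((s * m + i) * m + j) div m = s * m + i"
    using assms by simp
  then show ?thesis
    using assms by (simp add: Tm_vertex_def div_mult2_eq)
qed

lemma bij_betw_Tm_vertex: "bij_betw (Tm_vertex m) {..<2 * m * m} (Tm_vertices m)"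
proof (rule bij_betw_byWitness[where f' = "\<lambda>(s, i, j). (s * m + i) * m + j"])
  show "\<forall>v\<in>{..<2 * m * m}. (case Tm_vertex m v of (s, i, j) \<Rightarrow> (s * m + i) * m + j) = v"
    by (simp add: Tm_vertex_def div_mult2_eq)
  show "\<forall>w\<in>Tm_vertices m. Tm_vertex m (case w of (s, i, j) \<Rightarrow> (s * m + i) * m + j) = w"
    by (auto simp: Tm_vertices_def Tm_vertex_encode)
  show "Tm_vertex m ` {..<2 * m * m} \<subseteq> Tm_vertices m"
    by (cases "m = 0") (auto simp: Tm_vertices_def Tm_vertex_def less_mult_imp_div_less mult.assoc)
  have "(s * m + i) * m + j < 2 * m * m" if "s < 2" "i < m" "j < m" for s i j
  proof -
    have "(s * m + i) * m + j < (s * m + i + 1) * m"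
      using that by simp
    also have "\<dots> \<le> 2 * m * m"
      using that by (intro mult_right_mono) (auto simp: less_2_cases_iff)
    finally show ?thesis .
  qed
  then show "(\<lambda>(s, i, j). (s * m + i) * m + j) ` Tm_vertices m \<subseteq> {..<2 * m * m}"
    by (auto simp: Tm_vertices_def)
qed

lemma sum_Tm_vertices:
  "(\<Sum>w\<in>Tm_vertices m. g w) = (\<Sum>i<m. \<Sum>j<m. g (0, i, j)) + (\<Sum>i<m. \<Sum>j<m. g (1, i, j))"
  by (simp add: Tm_vertices_def sum.cartesian_product' lessThan_Suc numeral_2_eq_2 add.commute)

text \<open>For m = 2 the two cycle neighbours (j + 1) mod m and (j + m - 1) mod m would coincide.\<close>

lemma Tm_neighbours:
  assumes "m \<ge> 3" and u: "(s, i, j) \<in> Tm_vertices m"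
  shows "{w \<in> Tm_vertices m. Tm_adj m (s, i, j) w}
    = {(s, i, (j + 1) mod m), (s, i, (j + m - 1) mod m), (1 - s, j, i)}"
proof (rule Set.set_eqI)
  fix w :: "nat \<times> nat \<times> nat"
  obtain s' i' j' where w: "w = (s', i', j')"
    by (cases w)
  define pred where "pred = (j + m - 1) mod m"
  have bounds: "(j + 1) mod m < m" "pred < m"
    using assms(1) by (simp_all add: pred_def)
  have is_pred: "j = (j' + 1) mod m \<longleftrightarrow> j' = pred" if "j' < m"
    using u that unfolding pred_def
    by (cases "j = 0"; cases "j' + 1 = m") (auto simp: Tm_vertices_def mod_if)
  have "w \<in> {w \<in> Tm_vertices m. Tm_adj m (s, i, j) w} \<longleftrightarrow>
      s' < 2 \<and> i' < m \<and> j' < m \<and> (s' = s \<and> i' = i \<and> (j' = (j + 1) mod m \<or> j = (j' + 1) mod m)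
        \<or> s' = 1 - s \<and> i' = j \<and> j' = i)"
    using u unfolding w Tm_adj_def Tm_vertices_def by (cases "s = 0") auto
  also have "\<dots> \<longleftrightarrow> w \<in> {(s, i, (j + 1) mod m), (s, i, pred), (1 - s, j, i)}"
    using u bounds is_pred unfolding w Tm_vertices_def by auto
  finally show "w \<in> {w \<in> Tm_vertices m. Tm_adj m (s, i, j) w} \<longleftrightarrow>
      w \<in> {(s, i, (j + 1) mod m), (s, i, (j + m - 1) mod m), (1 - s, j, i)}"
    unfolding pred_def .
qed

lemma sum_Tm_neighbours:
  fixes g :: "nat \<times> nat \<times> nat \<Rightarrow> 'a :: semiring_1"
  assumes "m \<ge> 3" and u: "(s, i, j) \<in> Tm_vertices m"
  shows "(\<Sum>w\<in>Tm_vertices m. (if Tm_adj m (s, i, j) w then 1 else 0) * g w)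
    = g (s, i, (j + 1) mod m) + g (s, i, (j + m - 1) mod m) + g (1 - s, j, i)"
proof -
  have "(j + 1) mod m \<noteq> (j + m - 1) mod m"
    using u assms(1) by (auto simp: Tm_vertices_def mod_if)
  moreover have "1 - s \<noteq> s"
    using u by (auto simp: Tm_vertices_def less_2_cases_iff)
  moreover have "(\<Sum>w\<in>Tm_vertices m. (if Tm_adj m (s, i, j) w then 1 else 0) * g w)
      = (\<Sum>w\<in>{w \<in> Tm_vertices m. Tm_adj m (s, i, j) w}. g w)"
    by (simp add: sum.inter_filter Tm_vertices_def) (intro sum.cong; simp)
  ultimately show ?thesis
    unfolding Tm_neighbours[OF assms] by (simp add: add.assoc)
qed

definition Tm_eigenvalue :: "nat \<Rightarrow> nat \<Rightarrow> nat \<Rightarrow> real \<Rightarrow> real" where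
  "Tm_eigenvalue m a b \<sigma> = cos (2 * pi * real a / real m) + cos (2 * pi * real b / real m)
     + \<sigma> * sqrt ((cos (2 * pi * real a / real m) - cos (2 * pi * real b / real m))^2 + 1)"

definition Tm_ratio :: "nat \<Rightarrow> nat \<Rightarrow> nat \<Rightarrow> real \<Rightarrow> real" where
  "Tm_ratio m a b \<sigma> = Tm_eigenvalue m a b \<sigma> - 2 * cos (2 * pi * real b / real m)"

lemma Tm_ratio_inverse:
  assumes "\<sigma> \<in> {1, -1}"
  shows "Tm_ratio m a b \<sigma> * (Tm_eigenvalue m a b \<sigma> - 2 * cos (2 * pi * real a / real m)) = 1"
proof -
  define x y where "x = cos (2 * pi * real a / real m)" and "y = cos (2 * pi * real b / real m)"
  define t where "t = \<sigma> * sqrt ((x - y)^2 + 1)"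
  have "t^2 = (x - y)^2 + 1"
    using assms by (auto simp: t_def power_mult_distrib)
  then have "(x - y + t) * (y - x + t) = 1"
    by (simp add: algebra_simps power2_eq_square)
  then show ?thesis
    by (simp add: Tm_ratio_def Tm_eigenvalue_def x_def[symmetric] y_def[symmetric] t_def[symmetric])
      (simp add: algebra_simps)
qed

lemma Tm_ratio_opposite_signs: "Tm_ratio m a b 1 * Tm_ratio m a b (-1) = -1"
proof -
  define d where "d = cos (2 * pi * real a / real m) - cos (2 * pi * real b / real m)"
  have "(d + sqrt (d^2 + 1)) * (d - sqrt (d^2 + 1)) = -1"
    by (simp add: algebra_simps power2_eq_square)
  then show ?thesis
    by (simp add: Tm_ratio_def Tm_eigenvalue_def d_def[symmetric]) (simp add: d_def algebra_simps)
qed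

definition Tm_eigenfun :: "nat \<Rightarrow> nat \<Rightarrow> nat \<Rightarrow> real \<Rightarrow> nat \<times> nat \<times> nat \<Rightarrow> complex" where
  "Tm_eigenfun m a b \<sigma> = (\<lambda>(s, i, j).
     if s = 0 then unity_root m (int a * int i) * unity_root m (int b * int j)
     else of_real (Tm_ratio m a b \<sigma>) * unity_root m (int b * int i) * unity_root m (int a * int j))"

lemma Tm_eigenfun_eigen_equation:
  assumes "m \<ge> 3" "\<sigma> \<in> {1, -1}" and u: "(s, i, j) \<in> Tm_vertices m"
  shows "(\<Sum>w\<in>Tm_vertices m. (if Tm_adj m (s, i, j) w then 1 else 0) * Tm_eigenfun m a b \<sigma> w)
    = of_real (Tm_eigenvalue m a b \<sigma>) * Tm_eigenfun m a b \<sigma> (s, i, j)"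
proof -
  have m: "m > 0"
    using assms(1) by simp
  let ?f = "Tm_eigenfun m a b \<sigma>" and ?\<omega> = "unity_root m"
  define \<beta> where "\<beta> = complex_of_real (Tm_ratio m a b \<sigma>)"
  define \<mu> where "\<mu> = complex_of_real (Tm_eigenvalue m a b \<sigma>)"
  have cos: "?\<omega> (int k) + ?\<omega> (- int k) = of_real (2 * cos (2 * pi * real k / real m))" for k
    using unity_root_add_uminus[of m "int k"] by simp
  have "(\<Sum>w\<in>Tm_vertices m. (if Tm_adj m (s, i, j) w then 1 else 0) * ?f w)
      = ?f (s, i, (j + 1) mod m) + ?f (s, i, (j + m - 1) mod m) + ?f (1 - s, j, i)"
    by (rule sum_Tm_neighbours[OF assms(1) u])
  also have "\<dots> = \<mu> * ?f (s, i, j)"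
  proof -
    consider "s = 0" | "s = 1"
      using u by (auto simp: Tm_vertices_def less_2_cases_iff)
    then show ?thesis
    proof cases
      case 1
      have "?f (s, i, (j + 1) mod m) + ?f (s, i, (j + m - 1) mod m) + ?f (1 - s, j, i)
          = ?\<omega> (int a * int i) * ?\<omega> (int b * int j) * (?\<omega> (int b) + ?\<omega> (- int b) + \<beta>)"
        unfolding Tm_eigenfun_def prod.case unity_root_succ_mod[OF m] unity_root_pred_mod[OF m]
        using 1 by (simp add: \<beta>_def algebra_simps)
      also have "?\<omega> (int b) + ?\<omega> (- int b) + \<beta> = \<mu>"
        unfolding cos \<beta>_def \<mu>_def Tm_ratio_def by simp
      finally show ?thesis
        using 1 by (simp add: Tm_eigenfun_def)
    next
      case 2
      have "?f (s, i, (j + 1) mod m) + ?f (s, i, (j + m - 1) mod m) + ?f (1 - s, j, i)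
          = ?\<omega> (int b * int i) * ?\<omega> (int a * int j) * (\<beta> * (?\<omega> (int a) + ?\<omega> (- int a)) + 1)"
        unfolding Tm_eigenfun_def prod.case unity_root_succ_mod[OF m] unity_root_pred_mod[OF m]
        using 2 by (simp add: \<beta>_def algebra_simps)
      also have "\<beta> * (?\<omega> (int a) + ?\<omega> (- int a)) + 1 = \<mu> * \<beta>"
        using Tm_ratio_inverse[OF assms(2), of m a b]
        unfolding cos \<beta>_def \<mu>_def by (simp flip: of_real_mult of_real_add) (simp add: algebra_simps)
      finally show ?thesis
        using 2 by (simp add: Tm_eigenfun_def \<beta>_def)
    qed
  qed
  finally show ?thesis
    unfolding \<mu>_def .
qed

lemma sum_Tm_eigenfun_cnj:
  assumes "a < m" "b < m" "a' < m" "b' < m"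
  shows "(\<Sum>w\<in>Tm_vertices m. Tm_eigenfun m a b \<sigma> w * cnj (Tm_eigenfun m a' b' \<sigma>' w))
    = (if a = a' \<and> b = b'
       then of_nat (m * m) * (1 + of_real (Tm_ratio m a b \<sigma> * Tm_ratio m a' b' \<sigma>')) else 0)"
proof -
  let ?\<omega> = "unity_root m"
  define S where "S c c' = (\<Sum>i<m. ?\<omega> ((int c - int c') * int i))" for c c'
  have S: "S a a' = (if a = a' then of_nat m else 0)" "S b b' = (if b = b' then of_nat m else 0)"
    unfolding S_def using assms by (simp_all add: sum_unity_root_orthogonal)
  have cnj: "?\<omega> (int c * int i) * cnj (?\<omega> (int c' * int i)) = ?\<omega> ((int c - int c') * int i)"
    for c c' i
    by (simp add: cnj_unity_root left_diff_distrib flip: unity_root_add)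
  have "(\<Sum>w\<in>Tm_vertices m. Tm_eigenfun m a b \<sigma> w * cnj (Tm_eigenfun m a' b' \<sigma>' w))
      = (\<Sum>i<m. \<Sum>j<m. ?\<omega> ((int a - int a') * int i) * ?\<omega> ((int b - int b') * int j))
      + of_real (Tm_ratio m a b \<sigma> * Tm_ratio m a' b' \<sigma>')
        * (\<Sum>i<m. \<Sum>j<m. ?\<omega> ((int b - int b') * int i) * ?\<omega> ((int a - int a') * int j))"
    unfolding sum_Tm_vertices sum_distrib_left
    by (simp add: Tm_eigenfun_def flip: cnj) (simp add: ac_simps)
  also have "\<dots> = S a a' * S b b' + of_real (Tm_ratio m a b \<sigma> * Tm_ratio m a' b' \<sigma>') * (S b b' * S a a')"
    unfolding S_def sum_product ..
  finally show ?thesis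
    unfolding S by (simp add: algebra_simps)
qed

definition Tm_eigenvector :: "nat \<Rightarrow> nat \<Rightarrow> nat \<Rightarrow> real \<Rightarrow> complex vec" where
  "Tm_eigenvector m a b \<sigma> = vec (2 * m * m) (\<lambda>v. Tm_eigenfun m a b \<sigma> (Tm_vertex m v))"

lemma Tm_eigenvector_cscalar:
  assumes "a < m" "b < m" "a' < m" "b' < m"
  shows "Tm_eigenvector m a b \<sigma> \<bullet>c Tm_eigenvector m a' b' \<sigma>'
    = (if a = a' \<and> b = b'
       then of_nat (m * m) * (1 + of_real (Tm_ratio m a b \<sigma> * Tm_ratio m a' b' \<sigma>')) else 0)"
proof -
  have "Tm_eigenvector m a b \<sigma> \<bullet>c Tm_eigenvector m a' b' \<sigma>'
      = (\<Sum>v<2 * m * m. Tm_eigenfun m a b \<sigma> (Tm_vertex m v) * cnj (Tm_eigenfun m a' b' \<sigma>' (Tm_vertex m v)))"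
    by (simp add: Tm_eigenvector_def scalar_prod_def atLeast0LessThan)
  also have "\<dots> = (\<Sum>w\<in>Tm_vertices m. Tm_eigenfun m a b \<sigma> w * cnj (Tm_eigenfun m a' b' \<sigma>' w))"
    by (rule sum.reindex_bij_betw[OF bij_betw_Tm_vertex])
  finally show ?thesis
    using sum_Tm_eigenfun_cnj[OF assms] by simp
qed

lemma Tm_eigenvectors_orthogonal:
  assumes "a < m" "b < m" "a' < m" "b' < m" "\<sigma> \<in> {1, -1}" "\<sigma>' \<in> {1, -1}"
    and "(a, b, \<sigma>) \<noteq> (a', b', \<sigma>')"
  shows "Tm_eigenvector m a b \<sigma> \<bullet>c Tm_eigenvector m a' b' \<sigma>' = 0"
proof (cases "a = a' \<and> b = b'")
  case True
  then have "Tm_ratio m a b \<sigma> * Tm_ratio m a' b' \<sigma>' = -1"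
    using assms(5-7) Tm_ratio_opposite_signs[of m a b] by (auto simp: mult.commute)
  then have "complex_of_real (Tm_ratio m a b \<sigma>) * complex_of_real (Tm_ratio m a' b' \<sigma>') = -1"
    by (metis of_real_1 of_real_minus of_real_mult)
  then show ?thesis
    using True Tm_eigenvector_cscalar[OF assms(1-4)] by simp
qed (use Tm_eigenvector_cscalar[OF assms(1-4)] in auto)

lemma eigenvector_Tm_eigenvector:
  assumes "m \<ge> 3" "a < m" "b < m" "\<sigma> \<in> {1, -1}"
  shows "eigenvector (map_mat complex_of_real (Tm_adjacency m)) (Tm_eigenvector m a b \<sigma>)
    (of_real (Tm_eigenvalue m a b \<sigma>))"
proof -
  let ?n = "2 * m * m" and ?A = "map_mat complex_of_real (Tm_adjacency m)"
  let ?x = "Tm_eigenvector m a b \<sigma>" and ?f = "Tm_eigenfun m a b \<sigma>"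
  have x: "?x \<in> carrier_vec ?n"
    by (simp add: Tm_eigenvector_def)
  have norm: "?x \<bullet>c ?x = of_real (real (m * m) * (1 + (Tm_ratio m a b \<sigma>)\<^sup>2))"
    using Tm_eigenvector_cscalar[of a m b a b \<sigma> \<sigma>] assms by (simp add: power2_eq_square)
  have "1 + (Tm_ratio m a b \<sigma>)\<^sup>2 > 0"
    by (intro add_pos_nonneg) simp_all
  then have "real (m * m) * (1 + (Tm_ratio m a b \<sigma>)\<^sup>2) \<noteq> 0"
    using assms(1) by simp
  then have "?x \<bullet>c ?x \<noteq> 0"
    unfolding norm of_real_eq_0_iff .
  then have "?x \<noteq> 0\<^sub>v ?n"
    by auto
  moreover have "?A *\<^sub>v ?x = of_real (Tm_eigenvalue m a b \<sigma>) \<cdot>\<^sub>v ?x"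
  proof (rule eq_vecI)
    fix v assume "v < dim_vec (of_real (Tm_eigenvalue m a b \<sigma>) \<cdot>\<^sub>v ?x)"
    then have v: "v < ?n"
      using x by simp
    have indicator: "complex_of_real (if P then 1 else 0) = (if P then 1 else 0)" for P
      by simp
    have "(?A *\<^sub>v ?x) $ v
        = (\<Sum>w<?n. (if Tm_adj m (Tm_vertex m v) (Tm_vertex m w) then 1 else 0) * ?f (Tm_vertex m w))"
      using v by (simp add: Tm_adjacency_def Tm_eigenvector_def scalar_prod_def atLeast0LessThan
          indicator)
    also have "\<dots> = (\<Sum>w\<in>Tm_vertices m. (if Tm_adj m (Tm_vertex m v) w then 1 else 0) * ?f w)"
      by (rule sum.reindex_bij_betw[OF bij_betw_Tm_vertex])
    also have "\<dots> = of_real (Tm_eigenvalue m a b \<sigma>) * ?f (Tm_vertex m v)"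
    proof -
      obtain s i j where u: "Tm_vertex m v = (s, i, j)"
        by (cases "Tm_vertex m v")
      have "(s, i, j) \<in> Tm_vertices m"
        using bij_betwE[OF bij_betw_Tm_vertex] v unfolding u[symmetric] by simp
      then show ?thesis
        unfolding u by (rule Tm_eigenfun_eigen_equation[OF assms(1,4)])
    qed
    also have "\<dots> = (of_real (Tm_eigenvalue m a b \<sigma>) \<cdot>\<^sub>v ?x) $ v"
      using v by (simp add: Tm_eigenvector_def)
    finally show "(?A *\<^sub>v ?x) $ v = (of_real (Tm_eigenvalue m a b \<sigma>) \<cdot>\<^sub>v ?x) $ v" .
  qed (simp add: Tm_adjacency_def Tm_eigenvector_def)
  ultimately show ?thesis
    using x by (simp add: eigenvector_def Tm_adjacency_def)
qed

theorem theorem6p9: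
  fixes m :: nat
  assumes "m \<ge> 3"
  shows "char_poly (Tm_adjacency m) =
    (\<Prod>(j, l, \<sigma>) \<in> {..<m} \<times> {..<m} \<times> {1::real, -1}.
       [: - (cos (2 * pi * real j / real m) + cos (2 * pi * real l / real m)
             + \<sigma> * sqrt ((cos (2 * pi * real j / real m) - cos (2 * pi * real l / real m))^2 + 1)), 1 :])"
proof -
  let ?J = "{..<m} \<times> {..<m} \<times> {1::real, -1}"
  define x where "x = (\<lambda>(a, b, \<sigma>). Tm_eigenvector m a b \<sigma>)"
  define ev where "ev = (\<lambda>(a, b, \<sigma>). complex_of_real (Tm_eigenvalue m a b \<sigma>))"
  have A: "Tm_adjacency m \<in> carrier_mat (2 * m * m) (2 * m * m)"
    by (simp add: Tm_adjacency_def)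
  have "char_poly (map_mat complex_of_real (Tm_adjacency m)) = (\<Prod>j\<in>?J. [:- ev j, 1:])"
  proof (rule char_poly_orthogonal_eigenvectors)
    show "card ?J = 2 * m * m"
      by (simp add: card_cartesian_product)
    show "eigenvector (map_mat complex_of_real (Tm_adjacency m)) (x j) (ev j)" if "j \<in> ?J" for j
      using that assms eigenvector_Tm_eigenvector by (auto simp: x_def ev_def)
    show "x j \<bullet>c x j' = 0" if "j \<in> ?J" "j' \<in> ?J" "j \<noteq> j'" for j j'
      using that by (cases j, cases j') (auto simp: x_def intro!: Tm_eigenvectors_orthogonal)
  qed (use A in auto)
  also have "\<dots> = map_poly complex_of_real (\<Prod>(a, b, \<sigma>)\<in>?J. [:- Tm_eigenvalue m a b \<sigma>, 1:])"
    by (simp add: ev_def of_real_poly_hom.hom_prod of_real_hom.map_poly_pCons_hom case_prod_beta)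
  finally show ?thesis
    using char_poly_eq_if_of_real_eq[OF A] by (simp add: Tm_eigenvalue_def)
qed

end
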